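(* Fix $T>0$ and start from a (DIC) initial condition with profile $\gamma$. There are constants $c_0=c_0(\gamma,T)$ and $c_1=c_1(\gamma)>0$ such that for all $|a|\ge c_0$, $\mathbb J(a)\ge c_1|a|^3/T$ and $\mathbb I(a)\ge c_1|a|^3/T$.
   Context: $M_1$: measurable $\gamma:\mathbb R\to[0,1]$; for $0<\rho_*,\rho^*<1$, $M_1(\rho_*,\rho^* )$: $\gamma\in M_1$ equal to $\rho_*$ on $(-\infty,x_*]$ and $\rho^*$ on $[x^*,\infty)$ for some $x_*\le x^*$. (DIC) profile: piecewise continuous $\gamma\in M_1(\rho_*,\rho^* )$. A density is $\mu\in D([0,T];M_1)$; $I_0(\mu)=\sup_{G\in C^{1,2}_K([0,T]\times\mathbb R)}\{\int G(T,\cdot)\mu_T-\int G(0,\cdot)\mu_0-\int_0^T\int\mu(\partial_t+\frac12\partial_x^2)G-\frac12\int_0^T\int\mu(1-\mu)G_x^2\}$; $I_\gamma(\mu)=I_0(\mu)$ if $\mu_0=\gamma$ and $\infty$ otherwise. $\mathbb J(a)=\inf\{I_\gamma(\mu):I_\gamma(\mu)<\infty,\ \int_0^\infty(\mu_T-\mu_0)dx=a\}$, $\mathbb I(a)=\inf\{I_\gamma(\mu):I_\gamma(\mu)<\infty,\ \int_0^\infty(\mu_T-\mu_0)dx=\int_0^a\mu_Tdx\}$, with $\int_0^\infty:=\lim_{L\to\infty}\int_0^L$ and $\int_0^a=-\int_a^0$ for $a<0$. *)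

theory Defs
  imports "HOL-Analysis.Analysis"
begin

definition M1 :: "(real \<Rightarrow> real) set" where
  "M1 = {g. g \<in> borel_measurable borel \<and> (\<forall>x. 0 \<le> g x \<and> g x \<le> 1)}"

definition M1_ends :: "real \<Rightarrow> real \<Rightarrow> (real \<Rightarrow> real) set" where
  "M1_ends rl rr = {g \<in> M1. \<exists>xl xr. xl \<le> xr \<and> (\<forall>x\<le>xl. g x = rl) \<and> (\<forall>x\<ge>xr. g x = rr)}"

definition piecewise_continuous :: "(real \<Rightarrow> real) \<Rightarrow> bool" where
  "piecewise_continuous g \<longleftrightarrow> (\<exists>S. finite S \<and> (\<forall>x. x \<notin> S \<longrightarrow> isCont g x) \<and>
      (\<forall>x\<in>S. (\<exists>l. (g \<longlongrightarrow> l) (at_left x)) \<and> (\<exists>r. (g \<longlongrightarrow> r) (at_right x))))"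

definition DIC :: "(real \<Rightarrow> real) \<Rightarrow> bool" where
  "DIC g \<longleftrightarrow> (\<exists>rl rr. 0 < rl \<and> rl < 1 \<and> 0 < rr \<and> rr < 1 \<and> g \<in> M1_ends rl rr \<and> piecewise_continuous g)"

definition CK :: "(real \<Rightarrow> real) set" where
  "CK = {\<phi>. continuous_on UNIV \<phi> \<and> (\<exists>L. \<forall>x. \<bar>x\<bar> > L \<longrightarrow> \<phi> x = 0)}"

text \<open>Densities: elements of D([0,T]; M1), i.e. paths t \<mapsto> mu t in M1, cadlag for the
  vague topology (tested against compactly supported continuous functions);
  joint measurability is required so that the space-time integrals make sense.\<close>
definition density :: "real \<Rightarrow> (real \<Rightarrow> real \<Rightarrow> real) \<Rightarrow> bool" where
  "density T \<mu> \<longleftrightarrow>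
     (\<forall>t\<in>{0..T}. \<mu> t \<in> M1) \<and>
     (\<lambda>(t,x). \<mu> t x) \<in> borel_measurable borel \<and>
     (\<forall>\<phi>\<in>CK. let f = (\<lambda>t. LINT x|lborel. \<mu> t x * \<phi> x) in
        (\<forall>t\<in>{0..<T}. (f \<longlongrightarrow> f t) (at_right t)) \<and>
        (\<forall>t\<in>{0<..T}. \<exists>l. (f \<longlongrightarrow> l) (at_left t)))"

definition pd_t :: "(real \<Rightarrow> real \<Rightarrow> real) \<Rightarrow> real \<Rightarrow> real \<Rightarrow> real" where
  "pd_t G t x = deriv (\<lambda>s. G s x) t"

definition pd_x :: "(real \<Rightarrow> real \<Rightarrow> real) \<Rightarrow> real \<Rightarrow> real \<Rightarrow> real" where
  "pd_x G t x = deriv (\<lambda>y. G t y) x"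

definition C12K :: "(real \<Rightarrow> real \<Rightarrow> real) set" where
  "C12K = {G. (\<forall>t x. (\<lambda>s. G s x) differentiable (at t)) \<and>
              (\<forall>t x. (\<lambda>y. G t y) differentiable (at x)) \<and>
              (\<forall>t x. (\<lambda>y. pd_x G t y) differentiable (at x)) \<and>
              continuous_on UNIV (\<lambda>(t,x). G t x) \<and>
              continuous_on UNIV (\<lambda>(t,x). pd_t G t x) \<and>
              continuous_on UNIV (\<lambda>(t,x). pd_x G t x) \<and>
              continuous_on UNIV (\<lambda>(t,x). pd_x (pd_x G) t x) \<and>
              (\<exists>L. \<forall>t x. \<bar>x\<bar> > L \<longrightarrow> G t x = 0)}"

definition I0 :: "real \<Rightarrow> (real \<Rightarrow> real \<Rightarrow> real) \<Rightarrow> ereal" where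
  "I0 T \<mu> = (SUP G\<in>C12K. ereal (
      (LINT x|lborel. G T x * \<mu> T x) - (LINT x|lborel. G 0 x * \<mu> 0 x)
      - (LINT t|lborel. indicator {0..T} t *
           (LINT x|lborel. \<mu> t x * (pd_t G t x + 1/2 * pd_x (pd_x G) t x)))
      - 1/2 * (LINT t|lborel. indicator {0..T} t *
           (LINT x|lborel. \<mu> t x * (1 - \<mu> t x) * (pd_x G t x)^2))))"

definition Igam :: "real \<Rightarrow> (real \<Rightarrow> real) \<Rightarrow> (real \<Rightarrow> real \<Rightarrow> real) \<Rightarrow> ereal" where
  "Igam T \<gamma> \<mu> = (if AE x in lborel. \<mu> 0 x = \<gamma> x then I0 T \<mu> else \<infinity>)"

definition has_improper_int0 :: "(real \<Rightarrow> real) \<Rightarrow> real \<Rightarrow> bool" where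
  "has_improper_int0 f v \<longleftrightarrow>
     ((\<lambda>L. LINT x|lborel. indicator {0..L} x * f x) \<longlongrightarrow> v) at_top"

definition int0a :: "(real \<Rightarrow> real) \<Rightarrow> real \<Rightarrow> real" where
  "int0a f a = (if 0 \<le> a then LINT x|lborel. indicator {0..a} x * f x
                else - (LINT x|lborel. indicator {a..0} x * f x))"

definition JJ :: "real \<Rightarrow> (real \<Rightarrow> real) \<Rightarrow> real \<Rightarrow> ereal" where
  "JJ T \<gamma> a = Inf {Igam T \<gamma> \<mu> | \<mu>. density T \<mu> \<and> Igam T \<gamma> \<mu> < \<infinity> \<and>
                    has_improper_int0 (\<lambda>x. \<mu> T x - \<mu> 0 x) a}"

definition II :: "real \<Rightarrow> (real \<Rightarrow> real) \<Rightarrow> real \<Rightarrow> ereal" where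
  "II T \<gamma> a = Inf {Igam T \<gamma> \<mu> | \<mu>. density T \<mu> \<and> Igam T \<gamma> \<mu> < \<infinity> \<and>
                    has_improper_int0 (\<lambda>x. \<mu> T x - \<mu> 0 x) (int0a (\<mu> T) a)}"

end

theory Submission
  imports Defs
begin

text \<open>
  Idea: $I_0$ is a supremum over test functions $G$, so any admissible $G$ gives a lower bound.
  We take $G(t,x) = c\cdot\phi(x)$ with $\phi$ a $C^2$ bump equal to $1$ on $[x_0,L]$ and
  vanishing outside $[x_0-w,L+w]$.  The endpoint terms produce $c$ times the net mass $F$ that
  entered $[x_0,L]$, up to an error $O(|c|w)$, while the two space-time integrals are
  $O(T|c|/w)$ and $O(Tc^2/w)$.  If $|F| \<approx> m$, choosing $w \<sim> m$ and $c \<sim> \pm m^2/T$ gives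
  $I_0 \<ge> \kappa\,m^3/T$.  For $\mathbb J(a)$ the flux through $0$ is $a$; for $\mathbb I(a)$
  the flux through $a$ is $\int_0^a\gamma$, which is at least $\rho|a|-C$ because the profile is
  constant with positive values $\rho_*,\rho^*$ near $\pm\infty$.
\<close>

definition trunc_pow :: "nat \<Rightarrow> real \<Rightarrow> real" where
  "trunc_pow n u = (max u 0) ^ n"

lemma trunc_pow_deriv:
  assumes "n \<ge> 2"
  shows "(trunc_pow n has_real_derivative (real n * trunc_pow (n - 1) x)) (at x)"
proof -
  consider "x > 0" | "x < 0" | "x = 0" by linarith
  then show ?thesis
  proof cases
    case 1
    have near: "\<forall>\<^sub>F u in nhds x. trunc_pow n u = u ^ n"
      using eventually_nhds_in_open[of "{0<..}" x] 1
      by (auto elim!: eventually_mono simp: trunc_pow_def)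
    show ?thesis
      using DERIV_pow[of n x UNIV] 1 by (subst DERIV_cong_ev[OF refl near]) (auto simp: trunc_pow_def)
  next
    case 2
    have near: "\<forall>\<^sub>F u in nhds x. trunc_pow n u = 0"
      using eventually_nhds_in_open[of "{..<0}" x] 2 assms
      by (auto elim!: eventually_mono simp: trunc_pow_def)
    show ?thesis
      using 2 assms by (subst DERIV_cong_ev[OF refl near]) (auto simp: trunc_pow_def power_0_left)
  next
    case 3
    obtain k where n: "n = Suc k" "k \<ge> 1" using assms by (cases n) auto
    have zero: "trunc_pow n 0 = 0" using n by (simp add: trunc_pow_def)
    have quotient_bound: "\<bar>(trunc_pow n (0 + h) - trunc_pow n 0) / h\<bar> \<le> \<bar>h\<bar> ^ k" for h
    proof (cases "h = 0")
      case False
      have "\<bar>trunc_pow n h\<bar> \<le> \<bar>h\<bar> ^ n"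
        unfolding trunc_pow_def power_abs by (rule power_mono) auto
      also have "\<dots> = \<bar>h\<bar> ^ k * \<bar>h\<bar>" unfolding n(1) by (rule power_Suc2)
      finally have "\<bar>trunc_pow n h\<bar> / \<bar>h\<bar> \<le> \<bar>h\<bar> ^ k"
        using False by (subst pos_divide_le_eq) auto
      then show ?thesis by (simp only: zero add_0_left diff_zero abs_divide)
    qed (use n in \<open>simp add: zero\<close>)
    have "((\<lambda>h::real. \<bar>h\<bar> ^ k) \<longlongrightarrow> \<bar>0\<bar> ^ k) (at 0)"
      by (intro tendsto_intros)
    then have bound_lim: "((\<lambda>h::real. \<bar>h\<bar> ^ k) \<longlongrightarrow> 0) (at 0)"
      using n(2) by (simp add: zero_power)
    have "\<forall>\<^sub>F h in at 0. norm ((trunc_pow n (0 + h) - trunc_pow n 0) / h) \<le> \<bar>h\<bar> ^ k"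
      by (intro always_eventually allI) (simp only: real_norm_def quotient_bound)
    then have "((\<lambda>h. (trunc_pow n (0 + h) - trunc_pow n 0) / h) \<longlongrightarrow> 0) (at 0)"
      using bound_lim by (rule Lim_null_comparison)
    then show ?thesis using 3 n by (simp add: DERIV_def trunc_pow_def zero_power)
  qed
qed

text \<open>A $C^2$ step function: \<open>step\<close> is the primitive of the quadratic B-spline on $[0,1]$,
  written with third differences of truncated cubics.\<close>

definition step :: "real \<Rightarrow> real" where
  "step u = 9/2 * (trunc_pow 3 u - 3 * trunc_pow 3 (u - 1/3) + 3 * trunc_pow 3 (u - 2/3) - trunc_pow 3 (u - 1))"

definition step1 :: "real \<Rightarrow> real" where
  "step1 u = 27/2 * (trunc_pow 2 u - 3 * trunc_pow 2 (u - 1/3) + 3 * trunc_pow 2 (u - 2/3) - trunc_pow 2 (u - 1))"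

definition step2 :: "real \<Rightarrow> real" where
  "step2 u = 27 * (trunc_pow 1 u - 3 * trunc_pow 1 (u - 1/3) + 3 * trunc_pow 1 (u - 2/3) - trunc_pow 1 (u - 1))"

lemma trunc_pow_shift_deriv:
  assumes "n \<ge> 2"
  shows "((\<lambda>u. trunc_pow n (u - c)) has_real_derivative (real n * trunc_pow (n - 1) (x - c))) (at x)"
  using DERIV_chain2[OF trunc_pow_deriv[OF assms] DERIV_diff[OF DERIV_ident DERIV_const]] by simp

lemma step_deriv: "(step has_real_derivative step1 x) (at x)"
proof -
  have d: "((\<lambda>u. trunc_pow 3 (u - c)) has_real_derivative 3 * trunc_pow 2 (x - c)) (at x)" for c
    using trunc_pow_shift_deriv[of 3] by simp
  have "((\<lambda>u. 9/2 * (trunc_pow 3 (u - 0) - 3 * trunc_pow 3 (u - 1/3) + 3 * trunc_pow 3 (u - 2/3)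
      - trunc_pow 3 (u - 1))) has_real_derivative 9/2 * (3 * trunc_pow 2 (x - 0)
      - 3 * (3 * trunc_pow 2 (x - 1/3)) + 3 * (3 * trunc_pow 2 (x - 2/3)) - 3 * trunc_pow 2 (x - 1))) (at x)"
    by (intro DERIV_cmult DERIV_diff DERIV_add d)
  then show ?thesis unfolding step_def[abs_def] step1_def by (simp add: algebra_simps)
qed

lemma step1_deriv: "(step1 has_real_derivative step2 x) (at x)"
proof -
  have d: "((\<lambda>u. trunc_pow 2 (u - c)) has_real_derivative 2 * trunc_pow 1 (x - c)) (at x)" for c
    using trunc_pow_shift_deriv[of 2] by simp
  have "((\<lambda>u. 27/2 * (trunc_pow 2 (u - 0) - 3 * trunc_pow 2 (u - 1/3) + 3 * trunc_pow 2 (u - 2/3)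
      - trunc_pow 2 (u - 1))) has_real_derivative 27/2 * (2 * trunc_pow 1 (x - 0)
      - 3 * (2 * trunc_pow 1 (x - 1/3)) + 3 * (2 * trunc_pow 1 (x - 2/3)) - 2 * trunc_pow 1 (x - 1))) (at x)"
    by (intro DERIV_cmult DERIV_diff DERIV_add d)
  then show ?thesis unfolding step1_def[abs_def] step2_def by (simp add: algebra_simps)
qed

lemma step_cont: "continuous_on UNIV step"
  using step_deriv by (rule DERIV_continuous_on)

lemma step1_cont: "continuous_on UNIV step1"
  using step1_deriv by (rule DERIV_continuous_on)

lemma step2_cont: "continuous_on UNIV step2"
  unfolding step2_def[abs_def] trunc_pow_def by (intro continuous_intros)

lemma step_left: "u \<le> 0 \<Longrightarrow> step u = 0 \<and> step1 u = 0 \<and> step2 u = 0"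
  by (simp add: step_def step1_def step2_def trunc_pow_def)

lemma step_right:
  assumes "u \<ge> 1"
  shows "step u = 1 \<and> step1 u = 0 \<and> step2 u = 0"
proof -
  have t: "trunc_pow k (u - c) = (u - c) ^ k" if "c \<le> 1" for c k
    using assms that by (simp add: trunc_pow_def)
  have t0: "trunc_pow k u = u ^ k" for k
    using t[of 0] by simp
  show ?thesis
    unfolding step_def step1_def step2_def using t[of "1/3"] t[of "2/3"] t[of 1] t0
    by (auto simp: power3_eq_cube power2_eq_square) (simp_all add: field_simps)
qed

lemma step_bounds: "\<bar>step u\<bar> \<le> 36" "\<bar>step1 u\<bar> \<le> 108" "\<bar>step2 u\<bar> \<le> 216"
proof -
  consider "u \<le> 0" | "u \<ge> 1" | "0 < u" "u < 1" by linarith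
  then have "\<bar>step u\<bar> \<le> 36 \<and> \<bar>step1 u\<bar> \<le> 108 \<and> \<bar>step2 u\<bar> \<le> 216"
  proof cases
    case 3
    have a: "0 \<le> trunc_pow k (u - c) \<and> trunc_pow k (u - c) \<le> 1" if "0 \<le> c" for c k
      using 3 that by (auto simp: trunc_pow_def intro!: power_le_one)
    show ?thesis
      unfolding step_def step1_def step2_def
      using a[of 0 1] a[of "1/3" 1] a[of "2/3" 1] a[of 1 1] a[of 0 2] a[of "1/3" 2] a[of "2/3" 2]
        a[of 1 2] a[of 0 3] a[of "1/3" 3] a[of "2/3" 3] a[of 1 3]
      by (simp add: abs_le_iff)
  qed (use step_left step_right in auto)
  then show "\<bar>step u\<bar> \<le> 36" "\<bar>step1 u\<bar> \<le> 108" "\<bar>step2 u\<bar> \<le> 216" by auto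
qed

definition ramp_up :: "real \<Rightarrow> real \<Rightarrow> real \<Rightarrow> real" where
  "ramp_up x0 w x = (x - x0 + w) / w"

definition ramp_down :: "real \<Rightarrow> real \<Rightarrow> real \<Rightarrow> real" where
  "ramp_down L w x = (L + w - x) / w"

definition bump :: "real \<Rightarrow> real \<Rightarrow> real \<Rightarrow> real \<Rightarrow> real" where
  "bump x0 L w x = step (ramp_up x0 w x) * step (ramp_down L w x)"

definition bump1 :: "real \<Rightarrow> real \<Rightarrow> real \<Rightarrow> real \<Rightarrow> real" where
  "bump1 x0 L w x =
     (step1 (ramp_up x0 w x) * step (ramp_down L w x) - step (ramp_up x0 w x) * step1 (ramp_down L w x)) / w"

definition bump2 :: "real \<Rightarrow> real \<Rightarrow> real \<Rightarrow> real \<Rightarrow> real" where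
  "bump2 x0 L w x = (step2 (ramp_up x0 w x) * step (ramp_down L w x)
      - 2 * step1 (ramp_up x0 w x) * step1 (ramp_down L w x) + step (ramp_up x0 w x) * step2 (ramp_down L w x)) / w^2"

definition edges :: "real \<Rightarrow> real \<Rightarrow> real \<Rightarrow> real \<Rightarrow> real" where
  "edges x0 L w x = indicator {x0-w..x0} x + indicator {L..L+w} x"

lemma
  assumes "w \<noteq> 0"
  shows ramp_up_deriv: "(ramp_up x0 w has_real_derivative 1/w) (at x)"
    and ramp_down_deriv: "(ramp_down L w has_real_derivative -1/w) (at x)"
  unfolding ramp_up_def[abs_def] ramp_down_def[abs_def] using assms
  by (auto intro!: derivative_eq_intros)

lemma
  assumes "w \<noteq> 0"
  shows bump_deriv: "(bump x0 L w has_real_derivative bump1 x0 L w x) (at x)"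
    and bump1_deriv: "(bump1 x0 L w has_real_derivative bump2 x0 L w x) (at x)"
proof -
  have u: "((\<lambda>x. step (ramp_up x0 w x)) has_real_derivative step1 (ramp_up x0 w x) * (1/w)) (at x)"
    and u1: "((\<lambda>x. step1 (ramp_up x0 w x)) has_real_derivative step2 (ramp_up x0 w x) * (1/w)) (at x)"
    using DERIV_chain2[OF step_deriv ramp_up_deriv[OF assms]]
      DERIV_chain2[OF step1_deriv ramp_up_deriv[OF assms]] by auto
  have d: "((\<lambda>x. step (ramp_down L w x)) has_real_derivative step1 (ramp_down L w x) * (-1/w)) (at x)"
    and d1: "((\<lambda>x. step1 (ramp_down L w x)) has_real_derivative step2 (ramp_down L w x) * (-1/w)) (at x)"
    using DERIV_chain2[OF step_deriv ramp_down_deriv[OF assms]]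
      DERIV_chain2[OF step1_deriv ramp_down_deriv[OF assms]] by auto
  show "(bump x0 L w has_real_derivative bump1 x0 L w x) (at x)"
    unfolding bump_def[abs_def] bump1_def
    by (rule DERIV_cong[OF DERIV_mult[OF u d]]) (use assms in \<open>simp add: field_simps\<close>)
  show "(bump1 x0 L w has_real_derivative bump2 x0 L w x) (at x)"
    unfolding bump1_def[abs_def] bump2_def
    by (rule DERIV_cong[OF DERIV_cdivide[OF DERIV_diff[OF DERIV_mult[OF u1 d] DERIV_mult[OF u d1]], of w]])
      (use assms in \<open>simp add: field_simps power2_eq_square\<close>)
qed

lemma
  assumes "w \<noteq> 0"
  shows bump_cont: "continuous_on UNIV (bump x0 L w)"
    and bump1_cont: "continuous_on UNIV (bump1 x0 L w)"
    and bump2_cont: "continuous_on UNIV (bump2 x0 L w)"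
proof -
  show "continuous_on UNIV (bump x0 L w)"
    using bump_deriv[OF assms] by (rule DERIV_continuous_on)
  show "continuous_on UNIV (bump1 x0 L w)"
    using bump1_deriv[OF assms] by (rule DERIV_continuous_on)
  have u: "continuous_on UNIV (ramp_up x0 w)" and d: "continuous_on UNIV (ramp_down L w)"
    unfolding ramp_up_def[abs_def] ramp_down_def[abs_def] by (intro continuous_intros; use assms in simp)+
  note c = continuous_on_compose2[OF _ _ subset_UNIV]
  show "continuous_on UNIV (bump2 x0 L w)"
    unfolding bump2_def[abs_def]
    by (intro continuous_intros c[OF step_cont u] c[OF step1_cont u] c[OF step2_cont u]
        c[OF step_cont d] c[OF step1_cont d] c[OF step2_cont d]) (use assms in auto)
qed

lemma bump_outside:
  assumes "w > 0" "x < x0 - w \<or> x > L + w"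
  shows "bump x0 L w x = 0 \<and> bump1 x0 L w x = 0 \<and> bump2 x0 L w x = 0"
proof -
  have "ramp_up x0 w x \<le> 0 \<or> ramp_down L w x \<le> 0"
    using assms by (auto simp: ramp_up_def ramp_down_def divide_le_0_iff)
  then show ?thesis using step_left unfolding bump_def bump1_def bump2_def by auto
qed

lemma bump_inside:
  assumes "w > 0" "x \<in> {x0..L}"
  shows "bump x0 L w x = 1"
proof -
  have "ramp_up x0 w x \<ge> 1" "ramp_down L w x \<ge> 1"
    using assms by (auto simp: ramp_up_def ramp_down_def le_divide_eq)
  then show ?thesis using step_right by (simp add: bump_def)
qed

lemma ramps_flat:
  assumes "w > 0"
  shows "x \<notin> {x0-w..x0} \<Longrightarrow> step1 (ramp_up x0 w x) = 0 \<and> step2 (ramp_up x0 w x) = 0"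
    and "x \<notin> {L..L+w} \<Longrightarrow> step1 (ramp_down L w x) = 0 \<and> step2 (ramp_down L w x) = 0"
proof -
  show "x \<notin> {x0-w..x0} \<Longrightarrow> step1 (ramp_up x0 w x) = 0 \<and> step2 (ramp_up x0 w x) = 0"
    using assms step_left step_right[of "ramp_up x0 w x"]
    by (fastforce simp: ramp_up_def divide_le_0_iff le_divide_eq)
  show "x \<notin> {L..L+w} \<Longrightarrow> step1 (ramp_down L w x) = 0 \<and> step2 (ramp_down L w x) = 0"
    using assms step_left step_right[of "ramp_down L w x"]
    by (fastforce simp: ramp_down_def divide_le_0_iff le_divide_eq)
qed

lemma abs_mult_le: "\<bar>a\<bar> \<le> A \<Longrightarrow> \<bar>b\<bar> \<le> B \<Longrightarrow> \<bar>a * b\<bar> \<le> A * B" for a b A B :: real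
  by (simp add: abs_mult mult_mono')

lemma edges_nonneg: "0 \<le> edges x0 L w x"
  by (simp add: edges_def)

lemma edges_sq: "(edges x0 L w x)^2 \<le> 2 * edges x0 L w x"
  by (simp add: edges_def indicator_def power2_eq_square)

lemma bump_abs_bound:
  assumes "w > 0"
  shows "\<bar>bump x0 L w x\<bar> \<le> 1296 * indicator {x0-w..L+w} x"
proof (cases "x \<in> {x0-w..L+w}")
  case True
  have "\<bar>bump x0 L w x\<bar> \<le> 36 * 36"
    unfolding bump_def by (rule abs_mult_le[OF step_bounds(1) step_bounds(1)])
  then show ?thesis using True by simp
next
  case False
  then show ?thesis using bump_outside[OF assms, of x] by auto
qed

lemma bump_minus_indicator:
  assumes "w > 0" "x0 \<le> L"
  shows "\<bar>bump x0 L w x - indicator {x0..L} x\<bar> \<le> 1297 * edges x0 L w x"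
proof -
  have b: "\<bar>bump x0 L w x\<bar> \<le> 36 * 36"
    unfolding bump_def by (rule abs_mult_le[OF step_bounds(1) step_bounds(1)])
  consider "x < x0 - w \<or> x > L + w" | "x \<in> {x0..L}" | "x \<in> {x0-w..x0} \<or> x \<in> {L..L+w}"
    unfolding atLeastAtMost_iff by linarith
  then show ?thesis
  proof cases
    case 1
    then show ?thesis using bump_outside[OF assms(1) 1] assms by (auto simp: edges_def indicator_def)
  next
    case 2
    then show ?thesis using bump_inside[OF assms(1) 2] by (simp add: edges_nonneg)
  next
    case 3
    then show ?thesis using b by (auto simp: edges_def indicator_def abs_le_iff)
  qed
qed

lemma bump1_bound:
  assumes "w > 0"
  shows "\<bar>bump1 x0 L w x\<bar> \<le> 3888 / w * edges x0 L w x"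
proof -
  have t1: "\<bar>step1 (ramp_up x0 w x) * step (ramp_down L w x)\<bar> \<le> 3888 * indicator {x0-w..x0} x"
    using abs_mult_le[OF step_bounds(2) step_bounds(1)] ramps_flat(1)[OF assms, of x x0]
    by (cases "x \<in> {x0-w..x0}") auto
  have t2: "\<bar>step (ramp_up x0 w x) * step1 (ramp_down L w x)\<bar> \<le> 3888 * indicator {L..L+w} x"
    using abs_mult_le[OF step_bounds(1) step_bounds(2)] ramps_flat(2)[OF assms, of x L]
    by (cases "x \<in> {L..L+w}") auto
  have "\<bar>bump1 x0 L w x\<bar>
      = \<bar>step1 (ramp_up x0 w x) * step (ramp_down L w x) - step (ramp_up x0 w x) * step1 (ramp_down L w x)\<bar> / w"
    unfolding bump1_def using assms by simp
  also have "\<dots> \<le> (3888 * indicator {x0-w..x0} x + 3888 * indicator {L..L+w} x) / w"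
    using t1 t2 assms by (intro divide_right_mono) auto
  finally show ?thesis by (simp add: edges_def algebra_simps)
qed

lemma bump1_sq_bound:
  assumes "w > 0"
  shows "(bump1 x0 L w x)^2 \<le> 2 * 3888^2 / w^2 * edges x0 L w x"
proof -
  have "\<bar>bump1 x0 L w x\<bar>^2 \<le> (3888 / w * edges x0 L w x)^2"
    by (rule power_mono[OF bump1_bound[OF assms] abs_ge_zero])
  then have "(bump1 x0 L w x)^2 \<le> (3888 / w * edges x0 L w x)^2"
    by simp
  also have "\<dots> = 3888^2 / w^2 * (edges x0 L w x)^2"
    by (simp add: power_mult_distrib power_divide)
  also have "\<dots> \<le> 3888^2 / w^2 * (2 * edges x0 L w x)"
    by (intro mult_left_mono edges_sq) auto
  finally show ?thesis by simp
qed

lemma bump2_bound: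
  assumes "w > 0"
  shows "\<bar>bump2 x0 L w x\<bar> \<le> 31104 / w^2 * edges x0 L w x"
proof -
  have t1: "\<bar>step2 (ramp_up x0 w x) * step (ramp_down L w x)\<bar> \<le> 7776 * indicator {x0-w..x0} x"
    using abs_mult_le[OF step_bounds(3) step_bounds(1)] ramps_flat(1)[OF assms, of x x0]
    by (cases "x \<in> {x0-w..x0}") auto
  have t2: "\<bar>step1 (ramp_up x0 w x) * step1 (ramp_down L w x)\<bar> \<le> 11664 * indicator {x0-w..x0} x"
    using abs_mult_le[OF step_bounds(2) step_bounds(2)] ramps_flat(1)[OF assms, of x x0]
    by (cases "x \<in> {x0-w..x0}") auto
  have t3: "\<bar>step (ramp_up x0 w x) * step2 (ramp_down L w x)\<bar> \<le> 7776 * indicator {L..L+w} x"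
    using abs_mult_le[OF step_bounds(1) step_bounds(3)] ramps_flat(2)[OF assms, of x L]
    by (cases "x \<in> {L..L+w}") auto
  have "\<bar>bump2 x0 L w x\<bar> = \<bar>step2 (ramp_up x0 w x) * step (ramp_down L w x)
      - 2 * (step1 (ramp_up x0 w x) * step1 (ramp_down L w x))
      + step (ramp_up x0 w x) * step2 (ramp_down L w x)\<bar> / w^2"
    unfolding bump2_def using assms by (simp add: mult.assoc)
  also have "\<dots> \<le> (31104 * indicator {x0-w..x0} x + 31104 * indicator {L..L+w} x) / w^2"
    using t1 t2 t3 assms by (intro divide_right_mono) (auto simp: indicator_def)
  finally show ?thesis by (simp add: edges_def algebra_simps)
qed

definition bump_test :: "real \<Rightarrow> real \<Rightarrow> real \<Rightarrow> real \<Rightarrow> real \<Rightarrow> real \<Rightarrow> real" where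
  "bump_test c x0 L w t x = c * bump x0 L w x"

lemma bump_test_pd_t: "pd_t (bump_test c x0 L w) t x = 0"
  unfolding pd_t_def bump_test_def by simp

lemma bump_test_pd_x: "w \<noteq> 0 \<Longrightarrow> pd_x (bump_test c x0 L w) = (\<lambda>t x. c * bump1 x0 L w x)"
  unfolding pd_x_def bump_test_def
  by (intro ext DERIV_imp_deriv DERIV_cmult bump_deriv)

lemma bump_test_pd_xx: "w \<noteq> 0 \<Longrightarrow> pd_x (pd_x (bump_test c x0 L w)) t x = c * bump2 x0 L w x"
  unfolding bump_test_pd_x pd_x_def
  by (intro DERIV_imp_deriv DERIV_cmult bump1_deriv)

lemma continuous_on_ignore_time:
  "continuous_on UNIV h \<Longrightarrow> continuous_on UNIV (\<lambda>(t::real, x::real). h x)"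
  unfolding case_prod_beta' by (rule continuous_on_compose2[OF _ continuous_on_snd]) auto

lemma bump_test_C12K:
  assumes "w > 0"
  shows "bump_test c x0 L w \<in> C12K"
proof -
  have w: "w \<noteq> 0" using assms by simp
  have dx: "(\<lambda>y. bump_test c x0 L w t y) differentiable (at x)"
    and dxx: "(\<lambda>y. pd_x (bump_test c x0 L w) t y) differentiable (at x)" for t x
    unfolding bump_test_pd_x[OF w] bump_test_def
    using DERIV_cmult[OF bump_deriv[OF w]] DERIV_cmult[OF bump1_deriv[OF w]]
    by (auto simp: real_differentiable_def) blast+
  have support: "bump_test c x0 L w t x = 0" if "\<bar>x\<bar> > \<bar>x0\<bar> + \<bar>L\<bar> + 2*w" for t x
  proof -
    have "x < x0 - w \<or> x > L + w" using that assms by linarith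
    then show ?thesis using bump_outside[OF assms] by (simp add: bump_test_def)
  qed
  have dt: "(\<lambda>s. bump_test c x0 L w s x) differentiable (at t)" for t x
    by (simp add: bump_test_def)
  have cont: "continuous_on UNIV (\<lambda>(t, x). bump_test c x0 L w t x)"
    "continuous_on UNIV (\<lambda>(t, x). pd_t (bump_test c x0 L w) t x)"
    "continuous_on UNIV (\<lambda>(t, x). pd_x (bump_test c x0 L w) t x)"
    unfolding bump_test_pd_t bump_test_pd_x[OF w] bump_test_def
    by (intro continuous_on_ignore_time continuous_intros bump_cont[OF w] bump1_cont[OF w] | simp)+
  have cont2: "continuous_on UNIV (\<lambda>(t, x). pd_x (pd_x (bump_test c x0 L w)) t x)"
    unfolding bump_test_pd_xx[OF w]
    by (intro continuous_on_ignore_time continuous_intros bump2_cont[OF w])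
  show ?thesis
    unfolding C12K_def using dt dx dxx cont cont2 support by blast
qed

lemma integral_abs_le_dominating:
  fixes h g :: "'a \<Rightarrow> real"
  assumes "\<And>x. \<bar>h x\<bar> \<le> g x" "integrable M g"
  shows "\<bar>integral\<^sup>L M h\<bar> \<le> integral\<^sup>L M g"
proof (cases "integrable M h")
  case True
  have "\<bar>integral\<^sup>L M h\<bar> \<le> integral\<^sup>L M (\<lambda>x. \<bar>h x\<bar>)" by (rule integral_abs_bound)
  also have "\<dots> \<le> integral\<^sup>L M g" using True assms by (intro integral_mono) auto
  finally show ?thesis .
next
  case False
  have "0 \<le> integral\<^sup>L M g"
    using assms(1) abs_ge_zero order_trans by (blast intro: integral_nonneg_AE AE_I2)
  then show ?thesis using False by (simp add: not_integrable_integral_eq)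
qed

lemma integrable_dominated:
  fixes h g :: "real \<Rightarrow> real"
  assumes "h \<in> borel_measurable borel" "\<And>x. \<bar>h x\<bar> \<le> g x" "integrable lborel g"
  shows "integrable lborel h"
  using assms(3)
proof (rule Bochner_Integration.integrable_bound)
  show "h \<in> borel_measurable lborel" using assms(1) by simp
  show "AE x in lborel. norm (h x) \<le> norm (g x)"
    using assms(2) by (intro AE_I2) (metis abs_ge_zero abs_of_nonneg order_trans real_norm_def)
qed

lemma indicator_integral:
  "a \<le> b \<Longrightarrow> integrable lborel (\<lambda>x. C * indicator {a..b} x :: real) \<and>
     (LINT x|lborel. C * indicator {a..b} x) = C * (b - a)"
  by (auto intro!: integrable_mult_right)

lemma edges_integral:
  assumes "w \<ge> 0"
  shows "integrable lborel (\<lambda>x. C * edges x0 L w x) \<and> (LINT x|lborel. C * edges x0 L w x) = C * (2*w)"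
proof -
  have i1: "integrable lborel (indicator {x0-w..x0} :: real \<Rightarrow> real)"
    and i2: "integrable lborel (indicator {L..L+w} :: real \<Rightarrow> real)" using assms by simp_all
  have "integrable lborel (\<lambda>x. C * (indicator {x0-w..x0} x + indicator {L..L+w} x) :: real)"
    using i1 i2 by (intro integrable_mult_right integrable_add) auto
  moreover have "(LINT x|lborel. C * (indicator {x0-w..x0} x + indicator {L..L+w} x)) = C * (2*w)"
    using i1 i2 assms by (simp add: integral_add)
  ultimately show ?thesis unfolding edges_def by simp
qed

lemma interval_integral_bound:
  fixes g :: "real \<Rightarrow> real"
  assumes "T \<ge> 0" "\<And>t. t \<in> {0..T} \<Longrightarrow> \<bar>g t\<bar> \<le> M"
  shows "\<bar>LINT t|lborel. indicator {0..T} t * g t\<bar> \<le> T * M"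
proof -
  have "M \<ge> 0" using assms(2)[of 0] assms(1) by auto
  then have "\<bar>LINT t|lborel. indicator {0..T} t * g t\<bar> \<le> (LINT t|lborel. M * indicator {0..T} t)"
  proof (intro integral_abs_le_dominating)
    show "integrable lborel (\<lambda>t. M * indicator {0..T} t :: real)"
      using indicator_integral[OF assms(1)] by blast
    show "\<bar>indicator {0..T} t * g t\<bar> \<le> M * indicator {0..T} t" for t
      using assms(2)[of t] \<open>M \<ge> 0\<close> by (cases "t \<in> {0..T}") auto
  qed
  also have "\<dots> = T * M" using indicator_integral[OF assms(1), of M] by simp
  finally show ?thesis .
qed

lemma M1D: "g \<in> M1 \<Longrightarrow> g \<in> borel_measurable borel \<and> 0 \<le> g x \<and> g x \<le> 1"
  by (simp add: M1_def)

lemma bounded_times_interval_integrable: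
  fixes g :: "real \<Rightarrow> real"
  assumes "g \<in> borel_measurable borel" "\<And>x. \<bar>g x\<bar> \<le> 1"
  shows "integrable lborel (\<lambda>x. indicator {p..q} x * g x)"
proof (cases "p \<le> q")
  case True
  show ?thesis
  proof (rule integrable_dominated[OF _ _ conjunct1[OF indicator_integral[OF True, of 1]]])
    show "(\<lambda>x. indicator {p..q} x * g x) \<in> borel_measurable borel" using assms(1) by measurable
    show "\<bar>indicator {p..q} x * g x\<bar> \<le> 1 * indicator {p..q} x" for x
      using assms(2)[of x] by (simp add: indicator_def)
  qed
qed simp

lemma bump_times_bounded_integrable:
  fixes g :: "real \<Rightarrow> real"
  assumes "w > 0" "x0 \<le> L" "g \<in> borel_measurable borel" "\<And>x. \<bar>g x\<bar> \<le> 1"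
  shows "integrable lborel (\<lambda>x. bump x0 L w x * g x)"
proof (rule integrable_dominated)
  have "bump x0 L w \<in> borel_measurable borel"
    using assms(1) by (intro borel_measurable_continuous_onI bump_cont) simp
  then show "(\<lambda>x. bump x0 L w x * g x) \<in> borel_measurable borel" using assms(3) by measurable
  show "integrable lborel (\<lambda>x. 1296 * indicator {x0-w..L+w} x :: real)"
    using indicator_integral[of "x0-w" "L+w" 1296] assms by simp
  show "\<bar>bump x0 L w x * g x\<bar> \<le> 1296 * indicator {x0-w..L+w} x" for x
    using abs_mult_le[OF bump_abs_bound[OF assms(1)] assms(4)] by simp
qed

lemma bump_pairing_error:
  fixes f :: "real \<Rightarrow> real"
  assumes w: "w > 0" and L: "x0 \<le> L" and f: "f \<in> borel_measurable borel" "\<And>x. \<bar>f x\<bar> \<le> 1"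
  shows "\<bar>(LINT x|lborel. bump x0 L w x * f x) - (LINT x|lborel. indicator {x0..L} x * f x)\<bar> \<le> 2594 * w"
proof -
  have "(LINT x|lborel. bump x0 L w x * f x) - (LINT x|lborel. indicator {x0..L} x * f x)
      = (LINT x|lborel. (bump x0 L w x - indicator {x0..L} x) * f x)"
    using Bochner_Integration.integral_diff[OF bump_times_bounded_integrable[OF w L f]
        bounded_times_interval_integrable[OF f]]
    by (simp add: algebra_simps)
  also have "\<bar>\<dots>\<bar> \<le> (LINT x|lborel. 1297 * edges x0 L w x)"
    using abs_mult_le[OF bump_minus_indicator[OF w L] f(2)] edges_integral[of w 1297] w
    by (intro integral_abs_le_dominating) auto
  also have "\<dots> = 1297 * (2 * w)" using edges_integral[of w 1297] w by simp
  finally show ?thesis by simp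
qed

lemma drift_term_bound:
  assumes "m \<in> M1" "w > 0"
  shows "\<bar>LINT x|lborel. m x * (0 + 1/2 * (c * bump2 x0 L w x))\<bar> \<le> \<bar>c\<bar> * 31104 / w"
proof -
  have "\<bar>LINT x|lborel. m x * (0 + 1/2 * (c * bump2 x0 L w x))\<bar>
      \<le> (LINT x|lborel. (\<bar>c\<bar>/2 * 31104 / w^2) * edges x0 L w x)"
  proof (rule integral_abs_le_dominating)
    show "integrable lborel (\<lambda>x. (\<bar>c\<bar>/2 * 31104 / w^2) * edges x0 L w x)"
      using edges_integral assms by auto
    fix x
    have "\<bar>m x * (0 + 1/2 * (c * bump2 x0 L w x))\<bar> \<le> 1 * (\<bar>c\<bar>/2 * \<bar>bump2 x0 L w x\<bar>)"
      using M1D[OF assms(1)] by (intro abs_mult_le) (auto simp: abs_mult)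
    also have "\<dots> \<le> \<bar>c\<bar>/2 * (31104 / w^2 * edges x0 L w x)"
      using mult_left_mono[OF bump2_bound[OF assms(2), of x0 L x], of "\<bar>c\<bar>/2"] by simp
    finally show "\<bar>m x * (0 + 1/2 * (c * bump2 x0 L w x))\<bar> \<le> (\<bar>c\<bar>/2 * 31104 / w^2) * edges x0 L w x"
      by simp
  qed
  also have "\<dots> = (\<bar>c\<bar>/2 * 31104 / w^2) * (2*w)" using edges_integral assms by simp
  also have "\<dots> = \<bar>c\<bar> * 31104 / w" using assms by (simp add: power2_eq_square field_simps)
  finally show ?thesis .
qed

lemma noise_term_bound:
  assumes "m \<in> M1" "w > 0"
  shows "\<bar>LINT x|lborel. m x * (1 - m x) * (c * bump1 x0 L w x)^2\<bar> \<le> c^2 * (4 * 3888^2) / w"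
proof -
  have "\<bar>LINT x|lborel. m x * (1 - m x) * (c * bump1 x0 L w x)^2\<bar>
      \<le> (LINT x|lborel. (c^2 * (2 * 3888^2) / w^2) * edges x0 L w x)"
  proof (rule integral_abs_le_dominating)
    show "integrable lborel (\<lambda>x. (c^2 * (2 * 3888^2) / w^2) * edges x0 L w x)"
      using edges_integral assms by auto
    fix x
    have "\<bar>m x * (1 - m x) * (c * bump1 x0 L w x)^2\<bar> \<le> 1 * (c^2 * (bump1 x0 L w x)^2)"
      using M1D[OF assms(1)]
      by (intro abs_mult_le) (auto simp: abs_mult power_mult_distrib mult_le_one)
    also have "\<dots> \<le> c^2 * (2 * 3888^2 / w^2 * edges x0 L w x)"
      using mult_left_mono[OF bump1_sq_bound[OF assms(2), of x0 L x], of "c^2"] by simp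
    finally show "\<bar>m x * (1 - m x) * (c * bump1 x0 L w x)^2\<bar>
        \<le> (c^2 * (2 * 3888^2) / w^2) * edges x0 L w x"
      by simp
  qed
  also have "\<dots> = (c^2 * (2 * 3888^2) / w^2) * (2*w)" using edges_integral assms by simp
  also have "\<dots> = c^2 * (4 * 3888^2) / w" using assms by (simp add: power2_eq_square field_simps)
  finally show ?thesis .
qed

lemma I0_ge_bump_test:
  fixes \<mu> :: "real \<Rightarrow> real \<Rightarrow> real"
  assumes T: "T > 0" and w: "w > 0" and L: "x0 \<le> L" and M: "\<forall>t\<in>{0..T}. \<mu> t \<in> M1"
  shows "ereal (c * (LINT x|lborel. indicator {x0..L} x * (\<mu> T x - \<mu> 0 x)) - \<bar>c\<bar> * (2594 * w)
      - T * (\<bar>c\<bar> * 31104 / w) - 1/2 * (T * (c^2 * (4 * 3888^2) / w))) \<le> I0 T \<mu>"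
proof -
  define G where "G = bump_test c x0 L w"
  define f where "f x = \<mu> T x - \<mu> 0 x" for x
  define endpoint where
    "endpoint = (LINT x|lborel. G T x * \<mu> T x) - (LINT x|lborel. G 0 x * \<mu> 0 x)"
  define drift where "drift = (LINT t|lborel. indicator {0..T} t *
      (LINT x|lborel. \<mu> t x * (pd_t G t x + 1/2 * pd_x (pd_x G) t x)))"
  define noise where "noise = (LINT t|lborel. indicator {0..T} t *
      (LINT x|lborel. \<mu> t x * (1 - \<mu> t x) * (pd_x G t x)^2))"
  have w0: "w \<noteq> 0" using w by simp
  have sup: "ereal (endpoint - drift - 1/2 * noise) \<le> I0 T \<mu>"
    unfolding I0_def G_def endpoint_def drift_def noise_def
    by (rule SUP_upper[OF bump_test_C12K[OF w]])
  have drift_bound: "\<bar>drift\<bar> \<le> T * (\<bar>c\<bar> * 31104 / w)"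
    unfolding drift_def G_def bump_test_pd_t bump_test_pd_xx[OF w0]
    using T M by (intro interval_integral_bound drift_term_bound w) auto
  have noise_bound: "\<bar>noise\<bar> \<le> T * (c^2 * (4 * 3888^2) / w)"
    unfolding noise_def G_def bump_test_pd_x[OF w0]
    using T M by (intro interval_integral_bound noise_term_bound w) auto
  have mT: "\<mu> T \<in> M1" and m0: "\<mu> 0 \<in> M1" using M T by auto
  have bounded: "\<mu> T \<in> borel_measurable borel" "\<And>x. \<bar>\<mu> T x\<bar> \<le> 1"
    "\<mu> 0 \<in> borel_measurable borel" "\<And>x. \<bar>\<mu> 0 x\<bar> \<le> 1"
    using M1D[OF mT] M1D[OF m0] by auto
  have f_meas: "f \<in> borel_measurable borel"
    unfolding f_def[abs_def] using bounded(1,3) by measurable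
  have f_bound: "\<bar>f x\<bar> \<le> 1" for x
    using M1D[OF mT, of x] M1D[OF m0, of x] by (auto simp: f_def)
  have "endpoint = c * (LINT x|lborel. bump x0 L w x * \<mu> T x) - c * (LINT x|lborel. bump x0 L w x * \<mu> 0 x)"
    by (simp add: endpoint_def G_def bump_test_def mult.assoc)
  also have "\<dots> = c * (LINT x|lborel. bump x0 L w x * f x)"
    using Bochner_Integration.integral_diff[OF bump_times_bounded_integrable[OF w L bounded(1,2)]
        bump_times_bounded_integrable[OF w L bounded(3,4)]]
    by (simp add: f_def right_diff_distrib)
  finally have endpoint: "endpoint = c * (LINT x|lborel. bump x0 L w x * f x)" .
  have "\<bar>c * ((LINT x|lborel. bump x0 L w x * f x) - (LINT x|lborel. indicator {x0..L} x * f x))\<bar>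
      \<le> \<bar>c\<bar> * (2594 * w)"
    unfolding abs_mult by (intro mult_left_mono bump_pairing_error[OF w L f_meas f_bound]) auto
  then have "c * (LINT x|lborel. indicator {x0..L} x * f x) - \<bar>c\<bar> * (2594 * w)
      - T * (\<bar>c\<bar> * 31104 / w) - 1/2 * (T * (c^2 * (4 * 3888^2) / w)) \<le> endpoint - drift - 1/2 * noise"
    using endpoint drift_bound noise_bound by (simp add: abs_le_iff right_diff_distrib)
  then show ?thesis
    using sup unfolding f_def by (meson ereal_less_eq(3) order_trans)
qed

lemma bump_tradeoff_arith:
  fixes D P Q T m c w s :: real
  assumes pos: "D > 0" "P > 0" "Q > 0" "T > 0" and m4: "m \<ge> 4" and mq: "m \<ge> 16*D*T*Q"
    and wd: "w = m/(4*D)" and cd: "c = m^2/(64*D*P^2*T)" and s: "s \<ge> m - 1"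
  shows "c * s - c*(D*w) - T*(c*Q/w) - 1/2*(T*(c^2*(4*P^2)/w)) \<ge> m^3/(512*D*P^2*T)"
proof -
  have mpos: "m > 0" using m4 by simp
  have cpos: "c \<ge> 0" using cd pos mpos by simp
  have Dw: "D * w = m/4" using wd pos by simp
  have "m*m \<ge> 1*m" using m4 by (intro mult_right_mono) auto
  then have "m*m \<ge> 16*D*T*Q" using mq by linarith
  then have "T*Q/w \<le> m/4"
    unfolding wd using pos mpos by (simp add: field_simps)
  then have "s - D*w - T*Q/w \<ge> m/4" using Dw s m4 by linarith
  then have "c * (s - D*w - T*Q/w) \<ge> c * (m/4)" using cpos by (intro mult_left_mono) auto
  then have first: "c * s - c*(D*w) - T*(c*Q/w) \<ge> c * (m/4)"
    by (simp add: algebra_simps)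
  have second: "1/2*(T*(c^2*(4*P^2)/w)) = 8*D*T*c^2*P^2/m"
    unfolding wd using pos mpos by (simp add: field_simps)
  have "c * (m/4) - 8*D*T*c^2*P^2/m = m^3/(512*D*P^2*T)"
    unfolding cd using pos mpos by (simp add: field_simps power2_eq_square power3_eq_cube)
  then show ?thesis using first second by linarith
qed

text \<open>If the net mass entering $[x_0,\infty)$ has size at least $m$ (large compared to $T$), the
  rate is at least of order $m^3/T$: choose $L$ with the flux through $[x_0,L]$ within $1$ of the
  limit and test with a bump of sign and size as above.\<close>

lemma flux_lower_bound:
  fixes \<mu> :: "real \<Rightarrow> real \<Rightarrow> real"
  assumes T: "T > 0" and M: "\<forall>t\<in>{0..T}. \<mu> t \<in> M1"
    and lim: "((\<lambda>L. LINT x|lborel. indicator {x0..L} x * (\<mu> T x - \<mu> 0 x)) \<longlongrightarrow> A) at_top"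
    and m: "\<bar>A\<bar> \<ge> m" "m \<ge> 4" "m \<ge> 16*2594*T*31104"
  shows "ereal (m^3/(512*2594*3888^2*T)) \<le> I0 T \<mu>"
proof -
  define F where "F L = (LINT x|lborel. indicator {x0..L} x * (\<mu> T x - \<mu> 0 x))" for L
  have "\<forall>\<^sub>F L in at_top. dist (F L) A < 1 \<and> L \<ge> x0"
    using tendstoD[OF lim[folded F_def], of 1] eventually_ge_at_top[of x0]
    by (rule eventually_conj) simp
  then obtain N where N: "\<And>L. L \<ge> N \<Longrightarrow> dist (F L) A < 1 \<and> L \<ge> x0"
    unfolding eventually_at_top_linorder by blast
  then obtain L where L: "dist (F L) A < 1" "L \<ge> x0"
    using order_refl by blast
  define s where "s = (if A \<ge> 0 then 1 else -1::real)"
  have sF: "s * F L \<ge> m - 1"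
    using L(1) m(1) by (auto simp: s_def dist_real_def abs_if split: if_splits)
  have s: "\<bar>s\<bar> = 1" "s^2 = 1"
    by (auto simp: s_def)
  define w where "w = m/(4*2594)"
  define c where "c = m^2/(64*2594*3888^2*T)"
  have "w > 0" "c \<ge> 0" using m(2) T by (auto simp: w_def c_def)
  define gain where "gain = (s*c) * F L - \<bar>s*c\<bar> * (2594 * w) - T * (\<bar>s*c\<bar> * 31104 / w)
      - 1/2 * (T * ((s*c)^2 * (4 * 3888^2) / w))"
  have I0: "ereal gain \<le> I0 T \<mu>"
    using I0_ge_bump_test[OF T \<open>w > 0\<close> L(2) M, of "s*c"] unfolding F_def gain_def by simp
  have "gain = c * (s * F L) - c*(2594*w) - T*(c*31104/w) - 1/2*(T*(c^2*(4*3888^2)/w))"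
    using s \<open>c \<ge> 0\<close> unfolding gain_def by (simp add: abs_mult power_mult_distrib)
  also have "\<dots> \<ge> m^3/(512*2594*3888^2*T)"
    by (rule bump_tradeoff_arith[OF _ _ _ T m(2) m(3) w_def c_def sF]) auto
  finally show ?thesis
    using I0 by (metis ereal_less_eq(3) order_trans)
qed

definition cubic_rate :: "real \<Rightarrow> real" where
  "cubic_rate \<rho> = \<rho>^3 / (8 * (512 * 2594 * 3888^2))"

definition flux_threshold :: "real \<Rightarrow> real \<Rightarrow> real \<Rightarrow> real" where
  "flux_threshold \<rho> C T = 2 * (C + 4 + 16 * 2594 * T * 31104) / \<rho>"

lemma flux_cubic_bound:
  fixes \<mu> :: "real \<Rightarrow> real \<Rightarrow> real"
  assumes T: "T > 0" and M: "\<forall>t\<in>{0..T}. \<mu> t \<in> M1"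
    and lim: "((\<lambda>L. LINT x|lborel. indicator {x0..L} x * (\<mu> T x - \<mu> 0 x)) \<longlongrightarrow> A) at_top"
    and \<rho>: "\<rho> > 0" and C: "C \<ge> 0" and flux: "\<bar>A\<bar> \<ge> \<rho> * \<bar>a\<bar> - C"
    and a: "\<bar>a\<bar> \<ge> flux_threshold \<rho> C T"
  shows "ereal (cubic_rate \<rho> * \<bar>a\<bar>^3 / T) \<le> I0 T \<mu>"
proof -
  define m where "m = \<rho> * \<bar>a\<bar> / 2"
  have "m \<ge> C + 4 + 16 * 2594 * T * 31104"
    using a \<rho> by (simp add: m_def flux_threshold_def field_simps)
  then have "\<bar>A\<bar> \<ge> m" "m \<ge> 4" "m \<ge> 16 * 2594 * T * 31104"
    using flux C T by (auto simp: m_def)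
  then have "ereal (m^3 / (512 * 2594 * 3888^2 * T)) \<le> I0 T \<mu>"
    by (rule flux_lower_bound[OF T M lim])
  moreover have "m^3 / (512 * 2594 * 3888^2 * T) = cubic_rate \<rho> * \<bar>a\<bar>^3 / T"
    by (simp add: m_def cubic_rate_def power_mult_distrib power_divide field_simps)
  ultimately show ?thesis by simp
qed

lemma split_interval_integral:
  fixes g :: "real \<Rightarrow> real"
  assumes g: "g \<in> borel_measurable borel" "\<And>x. \<bar>g x\<bar> \<le> 1" and pq: "p \<le> q" "q \<le> r"
  shows "(LINT x|lborel. indicator {p..r} x * g x) =
    (LINT x|lborel. indicator {p..q} x * g x) + (LINT x|lborel. indicator {q..r} x * g x)"
proof -
  have "AE x in lborel. indicator {p..r} x * g x = indicator {p..q} x * g x + indicator {q..r} x * g x"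
    by (rule eventually_mono[OF AE_lborel_singleton[of q]]) (use pq in \<open>auto simp: indicator_def\<close>)
  then have "(LINT x|lborel. indicator {p..r} x * g x) =
      (LINT x|lborel. indicator {p..q} x * g x + indicator {q..r} x * g x)"
    using g by (intro integral_cong_AE) auto
  also have "\<dots> = (LINT x|lborel. indicator {p..q} x * g x) + (LINT x|lborel. indicator {q..r} x * g x)"
    using g by (intro Bochner_Integration.integral_add bounded_times_interval_integrable)
  finally show ?thesis .
qed

lemma integral_from_split:
  fixes g :: "real \<Rightarrow> real"
  assumes g: "g \<in> borel_measurable borel" "\<And>x. \<bar>g x\<bar> \<le> 1" and L: "0 \<le> L" "a \<le> L"
  shows "(LINT x|lborel. indicator {a..L} x * g x) = (LINT x|lborel. indicator {0..L} x * g x) - int0a g a"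
proof (cases "a \<ge> 0")
  case True
  then show ?thesis using split_interval_integral[OF g True L(2)] by (simp add: int0a_def)
next
  case False
  then show ?thesis using split_interval_integral[OF g _ L(1), of a] by (simp add: int0a_def)
qed

lemma int0a_diff:
  fixes g h :: "real \<Rightarrow> real"
  assumes g: "g \<in> borel_measurable borel" "\<And>x. \<bar>g x\<bar> \<le> 1"
    and h: "h \<in> borel_measurable borel" "\<And>x. \<bar>h x\<bar> \<le> 1"
  shows "int0a (\<lambda>x. g x - h x) a = int0a g a - int0a h a"
  using Bochner_Integration.integral_diff[OF bounded_times_interval_integrable[OF g]
      bounded_times_interval_integrable[OF h], of 0 a]
    Bochner_Integration.integral_diff[OF bounded_times_interval_integrable[OF g]
      bounded_times_interval_integrable[OF h], of a 0]
  by (simp add: int0a_def right_diff_distrib)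

lemma int0a_cong_AE:
  fixes g h :: "real \<Rightarrow> real"
  assumes "g \<in> borel_measurable borel" "h \<in> borel_measurable borel" "AE x in lborel. g x = h x"
  shows "int0a g a = int0a h a"
proof -
  have "(LINT x|lborel. indicator {p..q} x * g x) = (LINT x|lborel. indicator {p..q} x * h x)" for p q
    using assms by (intro integral_cong_AE) (auto elim: eventually_mono)
  then show ?thesis by (simp add: int0a_def)
qed

text \<open>For $\mathbb I$: the constraint says that the mass entering $[0,\infty)$ equals
  $\int_0^a \mu_T$; equivalently the mass entering $[a,\infty)$ equals $\int_0^a \gamma$.\<close>

lemma II_flux_limit:
  fixes \<mu> :: "real \<Rightarrow> real \<Rightarrow> real" and \<gamma> :: "real \<Rightarrow> real"
  assumes mT: "\<mu> T \<in> M1" and m0: "\<mu> 0 \<in> M1" and \<gamma>: "\<gamma> \<in> M1"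
    and initial: "AE x in lborel. \<mu> 0 x = \<gamma> x"
    and flux: "has_improper_int0 (\<lambda>x. \<mu> T x - \<mu> 0 x) (int0a (\<mu> T) a)"
  shows "((\<lambda>L. LINT x|lborel. indicator {a..L} x * (\<mu> T x - \<mu> 0 x)) \<longlongrightarrow> int0a \<gamma> a) at_top"
proof -
  define f where "f x = \<mu> T x - \<mu> 0 x" for x
  have bounded: "\<mu> T \<in> borel_measurable borel" "\<And>x. \<bar>\<mu> T x\<bar> \<le> 1"
    "\<mu> 0 \<in> borel_measurable borel" "\<And>x. \<bar>\<mu> 0 x\<bar> \<le> 1" "\<gamma> \<in> borel_measurable borel"
    using M1D[OF mT] M1D[OF m0] M1D[OF \<gamma>] by auto
  have f_meas: "f \<in> borel_measurable borel"
    unfolding f_def[abs_def] using bounded(1,3) by measurable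
  have f_bound: "\<bar>f x\<bar> \<le> 1" for x
    using M1D[OF mT, of x] M1D[OF m0, of x] by (auto simp: f_def)
  have "int0a f a = int0a (\<mu> T) a - int0a (\<mu> 0) a"
    unfolding f_def by (rule int0a_diff[OF bounded(1-4)])
  also have "int0a (\<mu> 0) a = int0a \<gamma> a"
    by (rule int0a_cong_AE[OF bounded(3,5) initial])
  finally have "int0a (\<mu> T) a - int0a f a = int0a \<gamma> a" by simp
  moreover have "((\<lambda>L. (LINT x|lborel. indicator {0..L} x * f x) - int0a f a)
      \<longlongrightarrow> int0a (\<mu> T) a - int0a f a) at_top"
    using flux unfolding has_improper_int0_def f_def[symmetric] by (rule tendsto_diff) simp
  ultimately have "((\<lambda>L. (LINT x|lborel. indicator {0..L} x * f x) - int0a f a) \<longlongrightarrow> int0a \<gamma> a) at_top"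
    by simp
  moreover have "\<forall>\<^sub>F L in at_top. (LINT x|lborel. indicator {0..L} x * f x) - int0a f a
      = (LINT x|lborel. indicator {a..L} x * f x)"
    using eventually_ge_at_top[of "max a 0"]
    by (rule eventually_mono) (auto intro!: integral_from_split[OF f_meas f_bound, symmetric])
  ultimately show ?thesis
    unfolding f_def by (rule Lim_transform_eventually)
qed

lemma integral_ge_on_plateau:
  fixes g :: "real \<Rightarrow> real"
  assumes g: "g \<in> borel_measurable borel" "\<And>x. 0 \<le> g x \<and> g x \<le> 1"
    and r: "\<And>x. p' \<le> x \<Longrightarrow> x \<le> q' \<Longrightarrow> g x = r"
    and pq: "p \<le> p'" "p' \<le> q'" "q' \<le> q"
  shows "(LINT x|lborel. indicator {p..q} x * g x) \<ge> r * (q' - p')"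
proof -
  have "r * (q' - p') = (LINT x|lborel. r * indicator {p'..q'} x)"
    using indicator_integral[OF pq(2), of r] pq(2) by simp
  also have "\<dots> \<le> (LINT x|lborel. indicator {p..q} x * g x)"
  proof (rule integral_mono)
    show "integrable lborel (\<lambda>x. r * indicator {p'..q'} x)"
      using indicator_integral[OF pq(2)] by blast
    show "integrable lborel (\<lambda>x. indicator {p..q} x * g x)"
      using g by (intro bounded_times_interval_integrable) (auto simp: abs_le_iff)
    show "r * indicator {p'..q'} x \<le> indicator {p..q} x * g x" for x
      using r[of x] g(2)[of x] pq by (auto simp: indicator_def)
  qed
  finally show ?thesis .
qed

lemma int0a_lower_bound:
  fixes \<gamma> :: "real \<Rightarrow> real"
  assumes \<gamma>: "\<gamma> \<in> M1" and left: "\<forall>x\<le>xl. \<gamma> x = rl" and right: "\<forall>x\<ge>xr. \<gamma> x = rr"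
    and r: "0 < rl" "rl \<le> 1" "0 < rr" "rr \<le> 1"
  shows "\<bar>int0a \<gamma> a\<bar> \<ge> min rl rr * \<bar>a\<bar> - (max xr 0 + max (-xl) 0)"
proof -
  define X where "X = max xr 0"
  define X' where "X' = max (-xl) 0"
  have g: "\<gamma> \<in> borel_measurable borel" "\<And>x. 0 \<le> \<gamma> x \<and> \<gamma> x \<le> 1" using M1D[OF \<gamma>] by auto
  have nonneg: "(LINT x|lborel. indicator {p..q} x * \<gamma> x) \<ge> 0" for p q
    using g(2) by (intro integral_nonneg_AE AE_I2) (simp add: indicator_def)
  have \<rho>: "min rl rr * b \<le> b" if "b \<ge> 0" for b
    using r that by (simp add: mult_left_le_one_le)
  show ?thesis
  proof (cases "a \<ge> 0")
    case True
    have "(LINT x|lborel. indicator {0..a} x * \<gamma> x) \<ge> min rl rr * a - X"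
    proof (cases "X \<le> a")
      case True
      have "(LINT x|lborel. indicator {0..a} x * \<gamma> x) \<ge> rr * (a - X)"
        using True right by (intro integral_ge_on_plateau[OF g]) (auto simp: X_def)
      moreover have "min rl rr * a \<le> rr * a" "rr * X \<le> X"
        using \<open>0 \<le> a\<close> r by (auto simp: X_def mult_right_mono mult_left_le_one_le)
      ultimately show ?thesis by (simp add: right_diff_distrib)
    qed (use nonneg[of 0 a] \<rho>[of a] \<open>0 \<le> a\<close> in auto)
    then show ?thesis using True by (simp add: int0a_def X_def X'_def)
  next
    case False
    have "(LINT x|lborel. indicator {a..0} x * \<gamma> x) \<ge> min rl rr * (-a) - X'"
    proof (cases "a \<le> -X'")
      case True
      have "(LINT x|lborel. indicator {a..0} x * \<gamma> x) \<ge> rl * (-X' - a)"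
        using True left by (intro integral_ge_on_plateau[OF g]) (auto simp: X'_def)
      moreover have "min rl rr * (-a) \<le> rl * (-a)" "rl * X' \<le> X'"
        using False r by (auto simp: X'_def mult_right_mono mult_left_le_one_le)
      ultimately show ?thesis by (simp add: right_diff_distrib)
    next
      case False
      have "-(min rl rr * a) \<le> -a"
        using \<rho>[of "-a"] \<open>\<not> 0 \<le> a\<close> by (simp only: mult_minus_right)
      then show ?thesis using nonneg[of a 0] False by linarith
    qed
    then show ?thesis using False nonneg[of a 0] by (simp add: int0a_def X_def X'_def)
  qed
qed

lemma density_M1: "density T \<mu> \<Longrightarrow> \<forall>t\<in>{0..T}. \<mu> t \<in> M1"
  unfolding density_def by blast

lemma Inf_rate_lower:
  assumes "\<And>\<mu>. density T \<mu> \<Longrightarrow> (AE x in lborel. \<mu> 0 x = \<gamma> x) \<Longrightarrow> P \<mu> \<Longrightarrow> B \<le> I0 T \<mu>"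
  shows "B \<le> Inf {Igam T \<gamma> \<mu> | \<mu>. density T \<mu> \<and> Igam T \<gamma> \<mu> < \<infinity> \<and> P \<mu>}"
  using assms by (intro Inf_greatest) (auto simp: Igam_def split: if_splits)

text \<open>For $\mathbb J$ the flux through $0$ is $a$ itself; for $\mathbb I$ the flux
  through $a$ is $\int_0^a\gamma$, which is at least $\rho|a| - C$.  In both cases
  \<open>flux_cubic_bound\<close> applies.\<close>

theorem lemma4p2:
  fixes \<gamma> :: "real \<Rightarrow> real"
  assumes "DIC \<gamma>"
  shows "\<exists>c1>0. \<forall>T>0. \<exists>c0. \<forall>a::real. \<bar>a\<bar> \<ge> c0 \<longrightarrow>
           JJ T \<gamma> a \<ge> ereal (c1 * \<bar>a\<bar>^3 / T) \<and> II T \<gamma> a \<ge> ereal (c1 * \<bar>a\<bar>^3 / T)"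
proof -
  obtain rl rr xl xr where r: "0 < rl" "rl < 1" "0 < rr" "rr < 1" and \<gamma>: "\<gamma> \<in> M1"
    and left: "\<forall>x\<le>xl. \<gamma> x = rl" and right: "\<forall>x\<ge>xr. \<gamma> x = rr"
    using assms unfolding DIC_def M1_ends_def by blast
  define \<rho> where "\<rho> = min rl rr"
  define C where "C = max xr 0 + max (-xl) 0"
  have \<rho>: "\<rho> > 0" "\<rho> \<le> 1" and C: "C \<ge> 0" using r by (auto simp: \<rho>_def C_def)
  have "cubic_rate \<rho> > 0" using \<rho> by (simp add: cubic_rate_def)
  moreover have "JJ T \<gamma> a \<ge> ereal (cubic_rate \<rho> * \<bar>a\<bar>^3 / T) \<and> II T \<gamma> a \<ge> ereal (cubic_rate \<rho> * \<bar>a\<bar>^3 / T)"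
    if T: "T > 0" and a: "\<bar>a\<bar> \<ge> flux_threshold \<rho> C T" for T a
  proof
    have "\<bar>a\<bar> \<ge> \<rho> * \<bar>a\<bar> - C" using \<rho> C mult_left_le_one_le[of "\<bar>a\<bar>" \<rho>] by simp
    then show "JJ T \<gamma> a \<ge> ereal (cubic_rate \<rho> * \<bar>a\<bar>^3 / T)"
      unfolding JJ_def has_improper_int0_def
      by (intro Inf_rate_lower flux_cubic_bound[OF T density_M1 _ \<rho>(1) C _ a]) auto
    have "\<bar>int0a \<gamma> a\<bar> \<ge> \<rho> * \<bar>a\<bar> - C"
      unfolding \<rho>_def C_def using int0a_lower_bound[OF \<gamma> left right] r by simp
    then show "II T \<gamma> a \<ge> ereal (cubic_rate \<rho> * \<bar>a\<bar>^3 / T)"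
      unfolding II_def using T \<gamma> density_M1
      by (intro Inf_rate_lower flux_cubic_bound[OF T density_M1 II_flux_limit \<rho>(1) C _ a]) auto
  qed
  ultimately show ?thesis by blast
qed

end
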